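(* Assume $\|\hat F'(y)-\hat F'(x)\|_F\le L_{\hat F}\|y-x\|$ for all $x,y\in\mathcal F$, and that there is $\mu>0$ with $\sigma_{\min}(\hat F'(x)^* )\ge\sqrt\mu$ for all $x\in\mathcal F$. Let $\{x_k\}$ be generated by Scheme 1 with $\tau_k=\hat f_1(x_k)$. Then for all $k\in\mathbb Z_+$: $$\hat f_1(x_{k+1})\le\varepsilon_k+\begin{cases}\frac{\hat f_1(x_k)}2+\frac{L_{\hat F}}{\mu}\hat f_2(x_k)\le\frac34\hat f_1(x_k),&\text{if }\hat f_1(x_k)\le\frac{\mu}{4L_{\hat F}},\\ \hat f_1(x_k)-\frac{\mu}{16L_{\hat F}},&\text{otherwise.}\end{cases}$$ If moreover $L_k=L_{\hat F}$ is fixed while generating the sequence, then $$\hat f_1(x_{k+1})\le\varepsilon_k+\begin{cases}\frac{\hat f_1(x_k)}2+\frac{L_{\hat F}}{2\mu}\hat f_2(x_k)\le\frac34\hat f_1(x_k),&\text{if }\hat f_1(x_k)\le\frac{\mu}{2L_{\hat F}},\\ \hat f_1(x_k)-\frac{\mu}{8L_{\hat F}},&\text{otherwise.}\end{cases}$$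
   Context: Let $F:\mathbb R^n\to\mathbb R^m$ be smooth, $\hat F=\frac1{\sqrt m}F$ with Jacobian $\hat F'(x)$ and adjoint (transpose) $\hat F'(x)^*$; Euclidean norms, $\|\cdot\|_F$ Frobenius norm. $\hat f_1(x)=\|\hat F(x)\|$, $\hat f_2=\hat f_1^2$, $\phi(x,y)=\|\hat F(x)+\hat F'(x)(y-x)\|$, $\psi_{x,L,\tau}(y)=\frac\tau2+\frac{\phi(x,y)^2}{2\tau}+\frac L2\|y-x\|^2$, $T_{L,\tau}(x)=\arg\min_y\psi_{x,L,\tau}(y)$. $\mathcal F$ closed convex with nonempty interior, $\mathcal L(v)=\{x:\hat f_1(x)\le v\}$, $\mathcal L(\hat f_1(x_0))\subseteq\mathcal F$ and the generated sequence stays in $\mathcal F$. Scheme 1 (input $x_0$, a rule choosing $\varepsilon_k\ge0,\tau_k>0$, $L\in(0,L_{\hat F}]$, $L_0=L$): for $k=0,1,\dots$: choose $\tau_k,\varepsilon_k$; compute $x_{k+1}$ with $\psi_{x_k,L_k,\tau_k}(x_{k+1})-\psi_{x_k,L_k,\tau_k}(T_{L_k,\tau_k}(x_k))\le\varepsilon_k$ and $\hat f_1(x_k)\ge\psi_{x_k,L_k,\tau_k}(x_{k+1})$; if $\hat f_1(x_{k+1})>\psi_{x_k,L_k,\tau_k}(x_{k+1})$, set $L_k:=\min\{2L_k,2L_{\hat F}\}$ and repeat; otherwise $L_{k+1}=\max\{L_k/2,L\}$. *)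

theory Defs
  imports "HOL-Analysis.Analysis"
begin

definition Fhat :: "(real^'n \<Rightarrow> real^'m) \<Rightarrow> real^'n \<Rightarrow> real^'m" where
  "Fhat F x = (1 / sqrt (real CARD('m))) *\<^sub>R F x"

definition Jhat :: "(real^'n \<Rightarrow> real^'m) \<Rightarrow> real^'n \<Rightarrow> real^'n^'m" where
  "Jhat F x = jacobian (Fhat F) (at x)"

definition frob_norm :: "real^'n^'m \<Rightarrow> real" where
  "frob_norm A = sqrt (\<Sum>i\<in>UNIV. \<Sum>j\<in>UNIV. (A $ i $ j)\<^sup>2)"

definition sigma_min :: "real^'c^'r \<Rightarrow> real" where
  "sigma_min B = Inf ((\<lambda>v. norm (B *v v)) ` {v. norm v = 1})"

definition f1 :: "(real^'n \<Rightarrow> real^'m) \<Rightarrow> real^'n \<Rightarrow> real" where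
  "f1 F x = norm (Fhat F x)"

definition f2 :: "(real^'n \<Rightarrow> real^'m) \<Rightarrow> real^'n \<Rightarrow> real" where
  "f2 F x = (f1 F x)\<^sup>2"

definition phi :: "(real^'n \<Rightarrow> real^'m) \<Rightarrow> real^'n \<Rightarrow> real^'n \<Rightarrow> real" where
  "phi F x y = norm (Fhat F x + Jhat F x *v (y - x))"

definition psi :: "(real^'n \<Rightarrow> real^'m) \<Rightarrow> real^'n \<Rightarrow> real \<Rightarrow> real \<Rightarrow> real^'n \<Rightarrow> real" where
  "psi F x L \<tau> y = \<tau> / 2 + (phi F x y)\<^sup>2 / (2 * \<tau>) + L / 2 * (norm (y - x))\<^sup>2"

definition Tmap :: "(real^'n \<Rightarrow> real^'m) \<Rightarrow> real \<Rightarrow> real \<Rightarrow> real^'n \<Rightarrow> real^'n" where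
  "Tmap F L \<tau> x = arg_min (psi F x L \<tau>) (\<lambda>_. True)"

definition sublevel :: "(real^'n \<Rightarrow> real^'m) \<Rightarrow> real \<Rightarrow> (real^'n) set" where
  "sublevel F v = {x. f1 F x \<le> v}"

definition trialL :: "real \<Rightarrow> real \<Rightarrow> nat \<Rightarrow> real" where
  "trialL LF Ls i = ((\<lambda>l. min (2 * l) (2 * LF)) ^^ i) Ls"

text \<open>At iteration k, trial points y 0, ..., y j are computed with L-values trialL LF (Ls k) i;
  trials i < j are rejected, trial j is accepted and y j = x (k+1).\<close>
definition scheme1 ::
  "(real^'n \<Rightarrow> real^'m) \<Rightarrow> real \<Rightarrow> real \<Rightarrow> (nat \<Rightarrow> real^'n) \<Rightarrow> (nat \<Rightarrow> real)
     \<Rightarrow> (nat \<Rightarrow> real) \<Rightarrow> (nat \<Rightarrow> real) \<Rightarrow> bool" where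
  "scheme1 F LF L x \<tau> \<epsilon> Lk \<longleftrightarrow>
     0 < L \<and> L \<le> LF \<and>
     (\<forall>k. 0 \<le> \<epsilon> k \<and> 0 < \<tau> k) \<and>
     (\<exists>Ls :: nat \<Rightarrow> real.
        Ls 0 = L \<and>
        (\<forall>k. Ls (Suc k) = max (Lk k / 2) L) \<and>
        (\<forall>k. \<exists>(j::nat) (y :: nat \<Rightarrow> real^'n).
            y j = x (Suc k) \<and> Lk k = trialL LF (Ls k) j \<and>
            (\<forall>i\<le>j.
               psi F (x k) (trialL LF (Ls k) i) (\<tau> k) (y i)
                 - psi F (x k) (trialL LF (Ls k) i) (\<tau> k)
                     (Tmap F (trialL LF (Ls k) i) (\<tau> k) (x k)) \<le> \<epsilon> k \<and>
               f1 F (x k) \<ge> psi F (x k) (trialL LF (Ls k) i) (\<tau> k) (y i)) \<and>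
            (\<forall>i<j. f1 F (y i) > psi F (x k) (trialL LF (Ls k) i) (\<tau> k) (y i)) \<and>
            f1 F (y j) \<le> psi F (x k) (trialL LF (Ls k) j) (\<tau> k) (y j)))"

end

theory Submission
  imports Defs
begin

text \<open>Write \<open>F\<close> for the scaled residual \<open>F/\<surd>m\<close> and \<open>f = f\<^sub>1(x\<^sub>k)\<close>.
  As \<open>\<sigma>\<^sub>m\<^sub>i\<^sub>n(F'(x)\<^sup>T) \<ge> \<surd>\<mu>\<close>, the Gauss-Newton system \<open>F'(x\<^sub>k) h = F(x\<^sub>k)\<close> has a
  solution with \<open>\<parallel>h\<parallel> \<le> f/\<surd>\<mu>\<close>. At \<open>x\<^sub>k - t h\<close> the linearization is \<open>(1 - t) F(x\<^sub>k)\<close>,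
  so acceptance and inexactness of the step give
  \<open>f\<^sub>1(x\<^sub>k\<^sub>+\<^sub>1) \<le> \<epsilon>\<^sub>k + f/2 + (1 - t)\<^sup>2 f/2 + L\<^sub>k t\<^sup>2 f\<^sup>2/(2\<mu>)\<close> for every \<open>t \<in> [0,1]\<close>.
  The doubling rule keeps \<open>L\<^sub>k \<le> 2 L\<^sub>F\<close>; \<open>t = 1\<close> gives the quadratic regime and
  \<open>t = \<mu>/(\<mu> + L\<^sub>k f)\<close> the linear decrease.
  In the paper the Lipschitz bound on \<open>F'\<close> only makes the backtracking terminate; here a
  completed run of the scheme is given.\<close>

lemma sigma_min_mult_norm_le:
  fixes B :: "real^'c^'r"
  assumes "s \<le> sigma_min B"
  shows "s * norm v \<le> norm (B *v v)"
proof (cases "v = 0")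
  case False
  have "sigma_min B \<le> norm (B *v (v /\<^sub>R norm v))"
    unfolding sigma_min_def using False by (intro cInf_lower bdd_belowI[where m=0]) auto
  also have "\<dots> = norm (B *v v) / norm v"
    by (simp add: matrix_vector_mult_scaleR divide_inverse_commute)
  finally have "sigma_min B * norm v \<le> norm (B *v v)"
    using False by (simp add: field_simps)
  then show ?thesis
    using assms by (meson mult_right_mono norm_ge_zero order_trans)
qed simp

lemma exists_preimage_norm_le:
  fixes J :: "real^'n^'m" and b :: "real^'m"
  assumes s: "0 < s" and lower: "\<And>v. s * norm v \<le> norm (transpose J *v v)"
  shows "\<exists>h. J *v h = b \<and> s * norm h \<le> norm b"
proof -
  let ?A = "J ** transpose J"
  have quad: "w \<bullet> (?A *v w) = (norm (transpose J *v w))\<^sup>2" for w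
    by (simp add: matrix_vector_mul_assoc[symmetric] dot_lmul_matrix[symmetric] power2_norm_eq_inner)
  have "inj ((*v) ?A)"
    unfolding vec.inj_iff_eq_0
  proof (intro allI impI)
    fix w
    assume "?A *v w = 0"
    then have "s * norm w \<le> 0"
      using quad[of w] lower[of w] by simp
    then show "w = 0"
      using s by (simp add: mult_le_0_iff)
  qed
  then have "surj ((*v) ?A)"
    using linear_inj_imp_surj matrix_vector_mul_linear by blast
  then obtain w where w: "?A *v w = b"
    by (metis surjD)
  define h where "h = transpose J *v w"
  have "J *v h = b"
    using w by (simp only: h_def matrix_vector_mul_assoc)
  moreover have "s * norm h \<le> norm b"
  proof -
    have "(norm h)\<^sup>2 \<le> norm w * norm b"
      using quad[of w] w norm_cauchy_schwarz[of w b] by (simp add: h_def)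
    then have "s * norm h * norm h \<le> (s * norm w) * norm b"
      using s by (simp add: power2_eq_square mult_left_mono mult.assoc)
    also have "\<dots> \<le> norm h * norm b"
      using lower[of w] by (simp add: h_def mult_right_mono)
    finally show ?thesis
      by (cases "h = 0") (simp_all add: mult.commute)
  qed
  ultimately show ?thesis
    by blast
qed

lemma continuous_on_psi: "continuous_on UNIV (psi F x L \<tau>)"
  unfolding psi_def phi_def divide_inverse
  by (intro continuous_intros continuous_on_compose2[OF matrix_vector_mult_linear_continuous_on]) auto

lemma psi_attains_min:
  assumes L: "0 < L" and \<tau>: "0 < \<tau>"
  obtains z where "\<And>y. psi F x L \<tau> z \<le> psi F x L \<tau> y"
proof -
  let ?P = "psi F x L \<tau>"
  have coercive: "L / 2 * (norm (y - x))\<^sup>2 \<le> ?P y" for y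
    using \<tau> unfolding psi_def by simp
  define R where "R = sqrt (2 * ?P x / L)"
  have "0 \<le> ?P x"
    using coercive[of x] by simp
  then have R: "0 \<le> R" "R\<^sup>2 = 2 * ?P x / L"
    using L by (simp_all add: R_def)
  have "\<exists>z\<in>cball x R. \<forall>y\<in>cball x R. ?P z \<le> ?P y"
    using R(1) by (intro continuous_attains_inf) (auto intro: continuous_on_subset[OF continuous_on_psi])
  then obtain z where z_min: "\<And>y. y \<in> cball x R \<Longrightarrow> ?P z \<le> ?P y"
    by blast
  have "?P z \<le> ?P y" for y
  proof (cases "y \<in> cball x R")
    case False
    then have "R\<^sup>2 < (norm (y - x))\<^sup>2"
      using R(1) by (intro power_strict_mono) (auto simp: dist_norm norm_minus_commute)
    then have "?P x < L / 2 * (norm (y - x))\<^sup>2"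
      using R(2) L by (simp add: field_simps)
    moreover have "?P z \<le> ?P x"
      using z_min R(1) by simp
    ultimately show ?thesis
      using coercive[of y] by linarith
  qed (use z_min in blast)
  then show thesis
    using that by blast
qed

lemma psi_Tmap_le:
  assumes "0 < L" "0 < \<tau>"
  shows "psi F x L \<tau> (Tmap F L \<tau> x) \<le> psi F x L \<tau> y"
proof -
  obtain z where z: "\<And>y. psi F x L \<tau> z \<le> psi F x L \<tau> y"
    using psi_attains_min[OF assms] by blast
  have "psi F x L \<tau> (Tmap F L \<tau> x) = psi F x L \<tau> z"
    unfolding Tmap_def by (rule arg_min_equality[where k = z]) (simp_all add: z)
  then show ?thesis
    using z by simp
qed

lemma psi_Tmap_le_model:
  fixes F :: "real^'n \<Rightarrow> real^'m"
  assumes L: "0 < L" and f: "0 < f1 F x" and \<mu>: "0 < \<mu>"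
    and \<sigma>: "sqrt \<mu> \<le> sigma_min (transpose (Jhat F x))"
    and t: "0 \<le> t" "t \<le> 1"
  shows "psi F x L (f1 F x) (Tmap F L (f1 F x) x)
    \<le> f1 F x / 2 + (1 - t)\<^sup>2 * f1 F x / 2 + L * t\<^sup>2 * (f1 F x)\<^sup>2 / (2 * \<mu>)"
proof -
  define f where "f = f1 F x"
  obtain h where h: "Jhat F x *v h = Fhat F x" "sqrt \<mu> * norm h \<le> f"
    using exists_preimage_norm_le[of "sqrt \<mu>" "Jhat F x" "Fhat F x"]
      sigma_min_mult_norm_le[OF \<sigma>] \<mu> by (auto simp: f_def f1_def)
  have "(sqrt \<mu> * norm h)\<^sup>2 \<le> f\<^sup>2"
    using h(2) \<mu> by (intro power_mono) auto
  then have "\<mu> * (norm h)\<^sup>2 \<le> f\<^sup>2"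
    using \<mu> by (simp add: power_mult_distrib)
  then have h_sq: "(norm h)\<^sup>2 \<le> f\<^sup>2 / \<mu>"
    using \<mu> by (simp add: field_simps)
  define z where "z = x - t *\<^sub>R h"
  have "z - x = (- t) *\<^sub>R h"
    by (simp add: z_def)
  then have "Jhat F x *v (z - x) = (- t) *\<^sub>R Fhat F x"
    using h(1) by (simp only: matrix_vector_mult_scaleR)
  then have "Fhat F x + Jhat F x *v (z - x) = (1 - t) *\<^sub>R Fhat F x"
    by (simp add: algebra_simps)
  then have "phi F x z = (1 - t) * f"
    using t by (simp add: phi_def f_def f1_def)
  moreover have "(norm (z - x))\<^sup>2 = t\<^sup>2 * (norm h)\<^sup>2"
    using t by (simp add: z_def power_mult_distrib)
  ultimately have "psi F x L f z = f / 2 + (1 - t)\<^sup>2 * f / 2 + L / 2 * (t\<^sup>2 * (norm h)\<^sup>2)"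
    using f unfolding psi_def f_def by (simp add: power_mult_distrib power2_eq_square)
  also have "\<dots> \<le> f / 2 + (1 - t)\<^sup>2 * f / 2 + L / 2 * (t\<^sup>2 * (f\<^sup>2 / \<mu>))"
    using h_sq L by (intro add_left_mono mult_left_mono) auto
  finally have "psi F x L f z \<le> f / 2 + (1 - t)\<^sup>2 * f / 2 + L * t\<^sup>2 * f\<^sup>2 / (2 * \<mu>)"
    by simp
  then show ?thesis
    using psi_Tmap_le[OF L f, where F = F and x = x and y = z] by (simp add: f_def)
qed

lemma model_at_optimal_step:
  fixes f \<mu> L :: real
  assumes "0 < f" "0 < \<mu>" "0 < L"
  shows "f / 2 + (1 - \<mu> / (\<mu> + L * f))\<^sup>2 * f / 2 + L * (\<mu> / (\<mu> + L * f))\<^sup>2 * f\<^sup>2 / (2 * \<mu>)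
    = f - f * \<mu> / (2 * (\<mu> + L * f))"
proof -
  define D where "D = \<mu> + L * f"
  have "0 < D"
    using assms by (simp add: D_def add_pos_pos)
  then show ?thesis
    using assms unfolding D_def[symmetric]
    by (simp add: field_simps power2_eq_square) (use D_def in algebra)
qed

definition decrease_estimate :: "real \<Rightarrow> real \<Rightarrow> real \<Rightarrow> real \<Rightarrow> real \<Rightarrow> bool" where
  "decrease_estimate c \<mu> f e y \<longleftrightarrow>
     y \<le> e + (if f \<le> \<mu> / (2 * c) then f / 2 + c / (2 * \<mu>) * f\<^sup>2 else f - \<mu> / (8 * c))
     \<and> (f \<le> \<mu> / (2 * c) \<longrightarrow> f / 2 + c / (2 * \<mu>) * f\<^sup>2 \<le> 3 / 4 * f)"

lemma decrease_estimate_from_model: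
  fixes f \<mu> L c y e :: real
  assumes f: "0 < f" and \<mu>: "0 < \<mu>" and L: "0 < L" "L \<le> c"
    and model: "\<And>t. 0 \<le> t \<Longrightarrow> t \<le> 1 \<Longrightarrow>
      y \<le> e + f / 2 + (1 - t)\<^sup>2 * f / 2 + L * t\<^sup>2 * f\<^sup>2 / (2 * \<mu>)"
  shows "decrease_estimate c \<mu> f e y"
proof -
  have c: "0 < c"
    using L by simp
  have full_step: "y \<le> e + (f / 2 + c / (2 * \<mu>) * f\<^sup>2)"
  proof -
    have "L * f\<^sup>2 / (2 * \<mu>) \<le> c * f\<^sup>2 / (2 * \<mu>)"
      using L \<mu> by (intro divide_right_mono mult_right_mono) auto
    then show ?thesis
      using model[of 1] by simp
  qed
  have quadratic: "f / 2 + c / (2 * \<mu>) * f\<^sup>2 \<le> 3 / 4 * f" if "f \<le> \<mu> / (2 * c)"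
  proof -
    have "c * f * f \<le> \<mu> / 2 * f"
      using that c f by (intro mult_right_mono) (auto simp: field_simps)
    then show ?thesis
      using \<mu> by (simp add: field_simps power2_eq_square)
  qed
  have linear: "y \<le> e + (f - \<mu> / (8 * c))" if "\<not> f \<le> \<mu> / (2 * c)"
  proof -
    define D where "D = \<mu> + L * f"
    have D: "0 < D"
      using \<mu> L f by (simp add: D_def add_pos_pos)
    have "0 \<le> \<mu> / D" "\<mu> / D \<le> 1"
      using D \<mu> L f by (simp_all add: D_def field_simps)
    then have "y \<le> e + (f / 2 + (1 - \<mu> / D)\<^sup>2 * f / 2 + L * (\<mu> / D)\<^sup>2 * f\<^sup>2 / (2 * \<mu>))"
      using model by (simp add: add.assoc)
    also have "\<dots> = e + (f - f * \<mu> / (2 * D))"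
      unfolding D_def model_at_optimal_step[OF f \<mu> L(1)] ..
    finally have step: "y \<le> e + (f - f * \<mu> / (2 * D))" .
    have "D \<le> 4 * (c * f)"
    proof -
      have "\<mu> < 2 * c * f"
        using that c by (simp add: field_simps)
      moreover have "L * f \<le> c * f"
        using L f by (intro mult_right_mono) auto
      moreover have "0 < c * f"
        using c f by simp
      ultimately show ?thesis
        unfolding D_def by linarith
    qed
    then have "f * \<mu> / (2 * (4 * (c * f))) \<le> f * \<mu> / (2 * D)"
      using D f \<mu> by (intro divide_left_mono) auto
    moreover have "\<mu> / (8 * c) = f * \<mu> / (2 * (4 * (c * f)))"
      using f by simp
    ultimately show ?thesis
      using step by linarith
  qed
  show ?thesis
    unfolding decrease_estimate_def using full_step quadratic linear by auto
qed

lemma trialL_bounds: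
  assumes "0 < l" "0 < LF"
  shows "0 < trialL LF l i \<and> trialL LF l i \<le> max l (2 * LF)"
  using assms by (induction i) (auto simp: trialL_def)

lemma scheme1_tau_pos:
  assumes "scheme1 F LF L x \<tau> \<epsilon> Lk"
  shows "0 < \<tau> k"
  using assms unfolding scheme1_def by blast

lemma scheme1_Lk_bounds:
  assumes "scheme1 F LF L x \<tau> \<epsilon> Lk"
  shows "0 < Lk k \<and> Lk k \<le> 2 * LF"
proof -
  obtain Ls where L: "0 < L" "L \<le> LF" and Ls0: "Ls 0 = L"
    and LsSuc: "\<And>k. Ls (Suc k) = max (Lk k / 2) L"
    and trial: "\<And>k. \<exists>j. Lk k = trialL LF (Ls k) j"
    using assms unfolding scheme1_def by metis
  have Lk_le: "0 < Lk k \<and> Lk k \<le> max (Ls k) (2 * LF)" if "0 < Ls k" for k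
    using trial[of k] trialL_bounds[OF that] L by auto
  have Ls_bounds: "0 < Ls k \<and> Ls k \<le> LF" for k
  proof (induction k)
    case (Suc k)
    then show ?case
      using Lk_le[of k] LsSuc[of k] L by auto
  qed (use Ls0 L in simp)
  show ?thesis
    using Lk_le[of k] Ls_bounds[of k] L by auto
qed

lemma scheme1_accepted_step:
  assumes "scheme1 F LF L x \<tau> \<epsilon> Lk"
  shows "f1 F (x (Suc k)) \<le> psi F (x k) (Lk k) (\<tau> k) (x (Suc k))"
    and "psi F (x k) (Lk k) (\<tau> k) (x (Suc k))
      - psi F (x k) (Lk k) (\<tau> k) (Tmap F (Lk k) (\<tau> k) (x k)) \<le> \<epsilon> k"
proof -
  obtain Ls j y where "y j = x (Suc k)" "Lk k = trialL LF (Ls k) j"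
    and "psi F (x k) (trialL LF (Ls k) j) (\<tau> k) (y j)
      - psi F (x k) (trialL LF (Ls k) j) (\<tau> k) (Tmap F (trialL LF (Ls k) j) (\<tau> k) (x k)) \<le> \<epsilon> k"
    and "f1 F (y j) \<le> psi F (x k) (trialL LF (Ls k) j) (\<tau> k) (y j)"
    using assms unfolding scheme1_def by blast
  then show "f1 F (x (Suc k)) \<le> psi F (x k) (Lk k) (\<tau> k) (x (Suc k))"
    and "psi F (x k) (Lk k) (\<tau> k) (x (Suc k))
      - psi F (x k) (Lk k) (\<tau> k) (Tmap F (Lk k) (\<tau> k) (x k)) \<le> \<epsilon> k"
    by simp_all
qed

lemma scheme1_residual_le_model:
  fixes F :: "real^'n \<Rightarrow> real^'m"
  assumes scheme: "scheme1 F LF L x \<tau> \<epsilon> Lk" and \<tau>: "\<tau> k = f1 F (x k)"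
    and \<mu>: "0 < \<mu>" and \<sigma>: "sqrt \<mu> \<le> sigma_min (transpose (Jhat F (x k)))"
    and t: "0 \<le> t" "t \<le> 1"
  shows "f1 F (x (Suc k)) \<le> \<epsilon> k + f1 F (x k) / 2 + (1 - t)\<^sup>2 * f1 F (x k) / 2
    + Lk k * t\<^sup>2 * (f1 F (x k))\<^sup>2 / (2 * \<mu>)"
proof -
  have f: "0 < f1 F (x k)"
    using scheme1_tau_pos[OF scheme, of k] \<tau> by simp
  have L: "0 < Lk k"
    using scheme1_Lk_bounds[OF scheme] by simp
  show ?thesis
    using scheme1_accepted_step[OF scheme, of k] psi_Tmap_le_model[OF L f \<mu> \<sigma> t]
    unfolding \<tau> by linarith
qed

lemma scheme1_decrease_estimate:
  fixes F :: "real^'n \<Rightarrow> real^'m"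
  assumes scheme: "scheme1 F LF L x \<tau> \<epsilon> Lk" and \<tau>: "\<tau> k = f1 F (x k)"
    and \<mu>: "0 < \<mu>" and \<sigma>: "sqrt \<mu> \<le> sigma_min (transpose (Jhat F (x k)))"
    and Lk: "Lk k \<le> c"
  shows "decrease_estimate c \<mu> (f1 F (x k)) (\<epsilon> k) (f1 F (x (Suc k)))"
proof -
  have f: "0 < f1 F (x k)"
    using scheme1_tau_pos[OF scheme, of k] \<tau> by simp
  have L: "0 < Lk k"
    using scheme1_Lk_bounds[OF scheme] by simp
  show ?thesis
    using decrease_estimate_from_model[OF f \<mu> L Lk scheme1_residual_le_model[OF scheme \<tau> \<mu> \<sigma>]] .
qed

theorem theorem3:
  fixes F :: "real^'n \<Rightarrow> real^'m"
    and S :: "(real^'n) set"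
    and LF L \<mu> :: real
    and x :: "nat \<Rightarrow> real^'n"
    and \<tau> \<epsilon> Lk :: "nat \<Rightarrow> real"
  assumes F_diff: "\<And>z. F differentiable (at z)"
    and F_C1: "continuous_on UNIV (\<lambda>z. jacobian F (at z))"
    and S_closed: "closed S" and S_convex: "convex S" and S_int: "interior S \<noteq> {}"
    and S_level: "sublevel F (f1 F (x 0)) \<subseteq> S"
    and x_in_S: "\<And>k. x k \<in> S"
    and Lip: "\<And>u v. u \<in> S \<Longrightarrow> v \<in> S \<Longrightarrow> frob_norm (Jhat F v - Jhat F u) \<le> LF * norm (v - u)"
    and mu_pos: "\<mu> > 0"
    and sigma: "\<And>u. u \<in> S \<Longrightarrow> sigma_min (transpose (Jhat F u)) \<ge> sqrt \<mu>"
    and scheme: "scheme1 F LF L x \<tau> \<epsilon> Lk"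
    and tau_def: "\<And>k. \<tau> k = f1 F (x k)"
  shows "(\<forall>k. f1 F (x (Suc k)) \<le> \<epsilon> k +
              (if f1 F (x k) \<le> \<mu> / (4 * LF)
               then f1 F (x k) / 2 + LF / \<mu> * f2 F (x k)
               else f1 F (x k) - \<mu> / (16 * LF))
            \<and> (f1 F (x k) \<le> \<mu> / (4 * LF) \<longrightarrow>
                 f1 F (x k) / 2 + LF / \<mu> * f2 F (x k) \<le> 3 / 4 * f1 F (x k)))
       \<and> ((\<forall>k. Lk k = LF) \<longrightarrow>
          (\<forall>k. f1 F (x (Suc k)) \<le> \<epsilon> k +
              (if f1 F (x k) \<le> \<mu> / (2 * LF)
               then f1 F (x k) / 2 + LF / (2 * \<mu>) * f2 F (x k)
               else f1 F (x k) - \<mu> / (8 * LF))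
            \<and> (f1 F (x k) \<le> \<mu> / (2 * LF) \<longrightarrow>
                 f1 F (x k) / 2 + LF / (2 * \<mu>) * f2 F (x k) \<le> 3 / 4 * f1 F (x k))))"
proof -
  note decrease = scheme1_decrease_estimate[OF scheme tau_def mu_pos sigma[OF x_in_S]]
  have general: "decrease_estimate (2 * LF) \<mu> (f1 F (x k)) (\<epsilon> k) (f1 F (x (Suc k)))" for k
    using decrease scheme1_Lk_bounds[OF scheme] by blast
  have fixed: "decrease_estimate LF \<mu> (f1 F (x k)) (\<epsilon> k) (f1 F (x (Suc k)))"
    if "\<forall>k. Lk k = LF" for k
    using decrease that by simp
  have halve: "\<mu> / (2 * (2 * LF)) = \<mu> / (4 * LF)" "2 * LF / (2 * \<mu>) = LF / \<mu>"
    "\<mu> / (8 * (2 * LF)) = \<mu> / (16 * LF)"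
    by simp_all
  show ?thesis
    using general fixed unfolding decrease_estimate_def halve f2_def by blast
qed

end
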